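(* There is no function $g:\mathbb{N}\to\mathbb{N}$ such that $\operatorname{dbw}(H)\le g(\operatorname{dbw}(J))$ for every digraph $J$ and every directed topological minor $H$ of $J$.
   Context: All digraphs are finite and loopless. Contracting an edge $\vec{xy}$ of $D$ removes $\vec{xy}$, $x$, $y$ and adds a new vertex with in-neighbourhood $(N^-(x)\cup N^-(y))\setminus\{x,y\}$ and out-neighbourhood $(N^+(x)\cup N^+(y))\setminus\{x,y\}$. Let $V_3(D)$ be the set of vertices incident with at least three edges. An edge $\vec{xy}$ is 2-contractible in $D$ if $\{x,y\}\not\subseteq V_3(D)$ and either $\vec{yx}\in E(D)$ or there is no pair $(w,z)$ of vertices of $V_3(D)$ (possibly $w=z$) such that $x$ can reach $w$ and $z$ can reach $y$ by directed paths in $D-\vec{xy}$. $H$ is a directed topological minor of $D$ if $H$ is obtained from a subgraph of $D$ by a sequence of contractions of 2-contractible edges. Directed branch-width: for $X\subseteq E(D)$, $S^V_X=\{y: \exists x,z,\ \vec{xy}\in E(D)\setminus X,\ \vec{yz}\in X\}$; $\operatorname{dbw}(D)$ is the minimum over $(T,\beta)$ ($T$ a tree of maximum degree at most three, $\beta$ a bijection from leaves onto $E(D)$) of the maximum over tree edges of $|S^V_{\beta(Y)}\cup S^V_{E(D)\setminus\beta(Y)}|$, $Y$ the leaves on one side (0 if no tree edges). *)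

theory Defs
  imports Main
begin

type_synonym digraph = "nat set \<times> (nat \<times> nat) set"

definition is_digraph :: "digraph \<Rightarrow> bool" where
  "is_digraph D \<longleftrightarrow> finite (fst D) \<and> snd D \<subseteq> fst D \<times> fst D \<and> (\<forall>v. (v, v) \<notin> snd D)"

definition is_subgraph :: "digraph \<Rightarrow> digraph \<Rightarrow> bool" where
  "is_subgraph H D \<longleftrightarrow> fst H \<subseteq> fst D \<and> snd H \<subseteq> snd D \<and> snd H \<subseteq> fst H \<times> fst H"

definition V3 :: "digraph \<Rightarrow> nat set" where
  "V3 D = {v \<in> fst D. card {e \<in> snd D. fst e = v \<or> snd e = v} \<ge> 3}"

text \<open>Contraction of the edge xy; the new vertex is given the name x
(this yields a digraph isomorphic to the one in the paper).\<close>
definition contract :: "digraph \<Rightarrow> nat \<Rightarrow> nat \<Rightarrow> digraph" where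
  "contract D x y =
     (let f = (\<lambda>v. if v = y then x else v)
      in (fst D - {y}, {(f a, f b) | a b. (a, b) \<in> snd D \<and> f a \<noteq> f b}))"

definition two_contractible :: "digraph \<Rightarrow> nat \<Rightarrow> nat \<Rightarrow> bool" where
  "two_contractible D x y \<longleftrightarrow>
     (x, y) \<in> snd D \<and> \<not> ({x, y} \<subseteq> V3 D) \<and>
     ((y, x) \<in> snd D \<or>
      \<not> (\<exists>w \<in> V3 D. \<exists>z \<in> V3 D.
            (x, w) \<in> (snd D - {(x, y)})\<^sup>* \<and> (z, y) \<in> (snd D - {(x, y)})\<^sup>*))"

inductive dtop_minor :: "digraph \<Rightarrow> digraph \<Rightarrow> bool" where
  sub: "is_subgraph H D \<Longrightarrow> dtop_minor H D"
| contr: "dtop_minor H D \<Longrightarrow> two_contractible H x y \<Longrightarrow> dtop_minor (contract H x y) D"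

definition is_tree :: "nat set \<Rightarrow> (nat \<times> nat) set \<Rightarrow> bool" where
  "is_tree N A \<longleftrightarrow> finite N \<and> N \<noteq> {} \<and> A \<subseteq> N \<times> N \<and> sym A \<and> (\<forall>v. (v, v) \<notin> A) \<and>
     (\<forall>u \<in> N. \<forall>v \<in> N. (u, v) \<in> A\<^sup>*) \<and>
     (\<forall>a b. (a, b) \<in> A \<longrightarrow> (a, b) \<notin> (A - {(a, b), (b, a)})\<^sup>*)"

definition tdeg :: "(nat \<times> nat) set \<Rightarrow> nat \<Rightarrow> nat" where
  "tdeg A u = card {v. (u, v) \<in> A}"

definition leaves :: "nat set \<Rightarrow> (nat \<times> nat) set \<Rightarrow> nat set" where
  "leaves N A = {u \<in> N. tdeg A u \<le> 1}"

definition SV :: "digraph \<Rightarrow> (nat \<times> nat) set \<Rightarrow> nat set" where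
  "SV D X = {y. \<exists>x z. (x, y) \<in> snd D - X \<and> (y, z) \<in> X}"

definition side_leaves :: "nat set \<Rightarrow> (nat \<times> nat) set \<Rightarrow> nat \<Rightarrow> nat \<Rightarrow> nat set" where
  "side_leaves N A a b = {l \<in> leaves N A. (a, l) \<in> (A - {(a, b), (b, a)})\<^sup>*}"

definition decomp_width ::
  "digraph \<Rightarrow> nat set \<Rightarrow> (nat \<times> nat) set \<Rightarrow> (nat \<Rightarrow> nat \<times> nat) \<Rightarrow> nat" where
  "decomp_width D N A \<beta> =
     Max (insert 0 {card (SV D (\<beta> ` side_leaves N A a b) \<union> SV D (snd D - \<beta> ` side_leaves N A a b))
                    | a b. (a, b) \<in> A})"

definition is_branch_decomp ::
  "digraph \<Rightarrow> nat set \<Rightarrow> (nat \<times> nat) set \<Rightarrow> (nat \<Rightarrow> nat \<times> nat) \<Rightarrow> bool" where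
  "is_branch_decomp D N A \<beta> \<longleftrightarrow> is_tree N A \<and> (\<forall>u \<in> N. tdeg A u \<le> 3) \<and>
     bij_betw \<beta> (leaves N A) (snd D)"

definition dbw :: "digraph \<Rightarrow> nat" where
  "dbw D = (if snd D = {} then 0 else
     Inf {decomp_width D N A \<beta> | N A \<beta>. is_branch_decomp D N A \<beta>})"

end

theory Submission
  imports Defs "HOL-Library.Nat_Bijection"
begin

text \<open>Let \<open>J\<^sub>n\<close> consist of a complete bipartite set of edges \<open>u\<^sub>i y\<^sub>j\<close> together with pendant paths
  \<open>u\<^sub>i q\<^sub>i \<leftarrow> p\<^sub>i\<close> and \<open>x\<^sub>j \<rightarrow> y\<^sub>j\<close>, \<open>x\<^sub>j \<rightarrow> t\<^sub>j\<close>.  Every vertex of \<open>J\<^sub>n\<close> is a source or a sink, so no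
  vertex ever lies in a set \<open>S\<^sup>V\<close> and \<open>dbw J\<^sub>n = 0\<close>.  Contracting the 2-contractible edges
  \<open>u\<^sub>i q\<^sub>i\<close> and \<open>x\<^sub>j y\<^sub>j\<close> yields \<open>H\<^sub>n\<close>: all edges \<open>u\<^sub>i x\<^sub>j\<close> plus \<open>p\<^sub>i u\<^sub>i\<close> and \<open>x\<^sub>j t\<^sub>j\<close>, so that every
  hub \<open>u\<^sub>i\<close>, \<open>x\<^sub>j\<close> has an in- and an out-edge.

  A subcubic tree always has an edge splitting its leaves in proportions between one and two
  thirds, so an optimal decomposition of \<open>H\<^sub>n\<close> yields a cut \<open>X\<close> with both sides holding at
  least a third of the \<open>\<ge> n\<^sup>2\<close> edges and with boundary \<open>W\<close> of size at most \<open>dbw H\<^sub>n\<close>.  A hub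
  outside \<open>W\<close> has all its edges on one side.  Unless \<open>W\<close> contains all \<open>u\<^sub>i\<close> or all \<open>x\<^sub>j\<close>, the
  edges \<open>u\<^sub>i x\<^sub>j\<close> connect the hubs outside \<open>W\<close>, so one side consists of edges between hubs in
  \<open>W\<close>, of which there are at most \<open>|W|\<^sup>2 + 2|W|\<close>.  Hence \<open>dbw H\<^sub>n\<close> grows like \<open>n / \<surd>3\<close>
  while \<open>dbw J\<^sub>n\<close> stays \<open>0\<close>.\<close>

lemma rtrancl_avoiding:
  assumes "(c, v) \<in> R\<^sup>*" and "(c, a) \<notin> R\<^sup>*"
  shows "(c, v) \<in> {(x, y). (x, y) \<in> R \<and> x \<noteq> a \<and> y \<noteq> a}\<^sup>*"
  using assms
proof (induction rule: rtrancl_induct)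
  case (step y z)
  then have "y \<noteq> a" and "z \<noteq> a"
    by (auto intro: rtrancl_into_rtrancl)
  with step show ?case
    by (auto intro: rtrancl_into_rtrancl)
qed simp

lemma rtrancl_first_step:
  assumes "(a, l) \<in> R\<^sup>*" and "l \<noteq> a"
  shows "\<exists>c. (a, c) \<in> R \<and> c \<noteq> a \<and> (c, l) \<in> {(x, y). (x, y) \<in> R \<and> x \<noteq> a \<and> y \<noteq> a}\<^sup>*"
  using assms
proof (induction rule: rtrancl_induct)
  case (step y z)
  show ?case
  proof (cases "y = a")
    case True
    with step show ?thesis by auto
  next
    case False
    with step obtain c where "(a, c) \<in> R" "c \<noteq> a"
      and "(c, y) \<in> {(x, y). (x, y) \<in> R \<and> x \<noteq> a \<and> y \<noteq> a}\<^sup>*"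
      by auto
    with step False show ?thesis
      by (blast intro: rtrancl_into_rtrancl)
  qed
qed simp

lemma rtrancl_split_at_edge:
  assumes "(a, l) \<in> A\<^sup>*"
  shows "(a, l) \<in> (A - {(a, b), (b, a)})\<^sup>* \<or> (b, l) \<in> (A - {(a, b), (b, a)})\<^sup>*"
  using assms
proof (induction rule: rtrancl_induct)
  case (step y z)
  then show ?case
    by (cases "(y, z) \<in> {(a, b), (b, a)}") (auto intro: rtrancl_into_rtrancl)
qed simp

lemma rtrancl_endpoint_in:
  "(a, v) \<in> R\<^sup>* \<Longrightarrow> R \<subseteq> N \<times> N \<Longrightarrow> v = a \<or> v \<in> N"
  by (induction rule: rtrancl_induct) auto

lemma is_treeD:
  assumes "is_tree N A"
  shows "finite N" "A \<subseteq> N \<times> N" "sym A" "(v, v) \<notin> A"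
    "u \<in> N \<Longrightarrow> w \<in> N \<Longrightarrow> (u, w) \<in> A\<^sup>*"
    "(a, b) \<in> A \<Longrightarrow> (a, b) \<notin> (A - {(a, b), (b, a)})\<^sup>*"
  using assms unfolding is_tree_def by auto

lemma finite_tree_neighbours:
  assumes "is_tree N A"
  shows "finite {v. (u, v) \<in> A}"
proof -
  have "{v. (u, v) \<in> A} \<subseteq> N"
    using is_treeD(2)[OF assms] by blast
  then show ?thesis
    using is_treeD(1)[OF assms] by (rule finite_subset)
qed

definition side_vertices :: "(nat \<times> nat) set \<Rightarrow> nat \<Rightarrow> nat \<Rightarrow> nat set" where
  "side_vertices A a b = {v. (a, v) \<in> (A - {(a, b), (b, a)})\<^sup>*}"

lemma finite_side_vertices:
  assumes "is_tree N A"
  shows "finite (side_vertices A a b)"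
proof -
  have "side_vertices A a b \<subseteq> insert a N"
    using rtrancl_endpoint_in[of a _ "A - {(a, b), (b, a)}" N] is_treeD(2)[OF assms]
    unfolding side_vertices_def by auto
  then show ?thesis
    using is_treeD(1)[OF assms] finite_subset by blast
qed

lemma side_vertices_psubset:
  assumes tree: "is_tree N A" and "(a, b) \<in> A" "(a, c) \<in> A" "c \<noteq> b"
  shows "side_vertices A c a \<subset> side_vertices A a b"
proof
  have "(c, a) \<in> A"
    using is_treeD(3)[OF tree] \<open>(a, c) \<in> A\<close> by (rule symD)
  then have no_return: "(c, a) \<notin> (A - {(c, a), (a, c)})\<^sup>*"
    by (rule is_treeD(6)[OF tree])
  show "side_vertices A c a \<subseteq> side_vertices A a b"
  proof
    fix v assume "v \<in> side_vertices A c a"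
    then have "(c, v) \<in> (A - {(c, a), (a, c)})\<^sup>*"
      unfolding side_vertices_def by (simp add: insert_commute)
    then have "(c, v) \<in> {(x, y). (x, y) \<in> A - {(c, a), (a, c)} \<and> x \<noteq> a \<and> y \<noteq> a}\<^sup>*"
      using no_return by (rule rtrancl_avoiding)
    then have "(c, v) \<in> (A - {(a, b), (b, a)})\<^sup>*"
      by (rule rtrancl_mono[THEN subsetD, rotated]) auto
    moreover have "(a, c) \<in> A - {(a, b), (b, a)}"
      using assms(3,4) is_treeD(4)[OF tree] by auto
    ultimately show "v \<in> side_vertices A a b"
      unfolding side_vertices_def by (simp add: converse_rtrancl_into_rtrancl)
  qed
  have "a \<notin> side_vertices A c a"
    using no_return unfolding side_vertices_def by (simp add: insert_commute)
  moreover have "a \<in> side_vertices A a b"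
    unfolding side_vertices_def by simp
  ultimately show "side_vertices A c a \<noteq> side_vertices A a b" by blast
qed

lemma side_leaves_subset: "side_leaves N A a b \<subseteq> leaves N A"
  unfolding side_leaves_def by auto

lemma side_leaves_descend:
  assumes l: "l \<in> side_leaves N A a b" and "l \<noteq> a"
  shows "\<exists>c. (a, c) \<in> A \<and> c \<noteq> b \<and> l \<in> side_leaves N A c a"
proof -
  let ?R = "A - {(a, b), (b, a)}"
  have "(a, l) \<in> ?R\<^sup>*"
    using l unfolding side_leaves_def by auto
  from rtrancl_first_step[OF this \<open>l \<noteq> a\<close>] obtain c where c: "(a, c) \<in> ?R" "c \<noteq> a"
    and cl: "(c, l) \<in> {(x, y). (x, y) \<in> ?R \<and> x \<noteq> a \<and> y \<noteq> a}\<^sup>*"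
    by blast
  from cl have "(c, l) \<in> (A - {(c, a), (a, c)})\<^sup>*"
    by (rule rtrancl_mono[THEN subsetD, rotated]) auto
  then have "l \<in> side_leaves N A c a"
    using l unfolding side_leaves_def by simp
  with c show ?thesis by blast
qed

section \<open>Balanced edges of subcubic trees\<close>

lemma finite_leaves: "is_tree N A \<Longrightarrow> finite (leaves N A)"
  unfolding leaves_def using is_treeD(1) by auto

lemma finite_side_leaves: "is_tree N A \<Longrightarrow> finite (side_leaves N A a b)"
  using finite_leaves side_leaves_subset by (rule finite_subset[rotated])

lemma side_leaves_cover:
  "side_leaves N A a b \<subseteq> {a} \<union> (\<Union>c\<in>{c. (a, c) \<in> A} - {b}. side_leaves N A c a)"
proof
  fix l assume "l \<in> side_leaves N A a b"
  then show "l \<in> {a} \<union> (\<Union>c\<in>{c. (a, c) \<in> A} - {b}. side_leaves N A c a)"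
    using side_leaves_descend[of l N A a b] by (cases "l = a") auto
qed

lemma card_side_leaves_at_leaf:
  assumes tree: "is_tree N A" and "a \<in> leaves N A" and "(a, b) \<in> A"
  shows "card (side_leaves N A a b) \<le> 1"
proof -
  have "card {c. (a, c) \<in> A} \<le> 1"
    using assms(2) unfolding leaves_def tdeg_def by simp
  then have "\<forall>c\<in>{c. (a, c) \<in> A}. c = b"
    using assms(3) card_le_Suc0_iff_eq[OF finite_tree_neighbours[OF tree]] by (metis One_nat_def mem_Collect_eq)
  then have "side_leaves N A a b \<subseteq> {a}"
    using side_leaves_cover[of N A a b] by auto
  then have "card (side_leaves N A a b) \<le> card {a}"
    by (rule card_mono[rotated]) simp
  then show ?thesis
    by simp
qed

lemma card_side_leaves_le_sum:
  assumes tree: "is_tree N A" and "a \<notin> leaves N A"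
  shows "card (side_leaves N A a b) \<le> (\<Sum>c\<in>{c. (a, c) \<in> A} - {b}. card (side_leaves N A c a))"
proof -
  let ?C = "{c. (a, c) \<in> A} - {b}"
  have finite_C: "finite ?C"
    using finite_tree_neighbours[OF tree] by (rule finite_Diff)
  have "side_leaves N A a b \<subseteq> (\<Union>c\<in>?C. side_leaves N A c a)"
  proof
    fix l assume l: "l \<in> side_leaves N A a b"
    then have "l \<noteq> a"
      using side_leaves_subset \<open>a \<notin> leaves N A\<close> by blast
    with l side_leaves_cover[of N A a b] show "l \<in> (\<Union>c\<in>?C. side_leaves N A c a)"
      by blast
  qed
  then have "card (side_leaves N A a b) \<le> card (\<Union>c\<in>?C. side_leaves N A c a)"
    using finite_C finite_side_leaves[OF tree] by (intro card_mono) auto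
  also have "\<dots> \<le> (\<Sum>c\<in>?C. card (side_leaves N A c a))"
    by (rule card_UN_le[OF finite_C])
  finally show ?thesis .
qed

text \<open>Of the at most two other neighbours \<open>c\<close> of \<open>a\<close>, one must carry at least a third of the
  leaves behind it, since otherwise the side of \<open>a\<close> would carry less than two thirds.\<close>

lemma heavy_side_has_heavy_neighbour:
  assumes tree: "is_tree N A" and subcubic: "\<forall>u\<in>N. tdeg A u \<le> 3"
    and m: "card (leaves N A) = m" "m \<ge> 2"
    and "(a, b) \<in> A" and heavy: "2 * m < 3 * card (side_leaves N A a b)"
  shows "\<exists>c. (a, c) \<in> A \<and> c \<noteq> b \<and> m \<le> 3 * card (side_leaves N A c a)"
proof (rule ccontr)
  let ?C = "{c. (a, c) \<in> A} - {b}"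
  assume no_heavy: "\<not> ?thesis"
  have light: "3 * card (side_leaves N A c a) \<le> m - 1" if "c \<in> ?C" for c
  proof -
    have "\<not> m \<le> 3 * card (side_leaves N A c a)"
      using no_heavy that by blast
    then show ?thesis
      by linarith
  qed
  have "a \<notin> leaves N A"
  proof
    assume "a \<in> leaves N A"
    then have "card (side_leaves N A a b) \<le> 1"
      using card_side_leaves_at_leaf[OF tree _ \<open>(a, b) \<in> A\<close>] by blast
    with heavy m(2) show False
      by linarith
  qed
  then have "3 * card (side_leaves N A a b) \<le> (\<Sum>c\<in>?C. 3 * card (side_leaves N A c a))"
    using card_side_leaves_le_sum[OF tree] by (simp add: sum_distrib_left[symmetric])
  also have "\<dots> \<le> (\<Sum>c\<in>?C. m - 1)"
    using light by (rule sum_mono)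
  also have "\<dots> = card ?C * (m - 1)"
    by simp
  also have "\<dots> \<le> 2 * (m - 1)"
  proof (rule mult_le_mono1)
    have "a \<in> N" "b \<in> {c. (a, c) \<in> A}"
      using \<open>(a, b) \<in> A\<close> is_treeD(2)[OF tree] by auto
    then have "card {c. (a, c) \<in> A} \<le> 3"
      using subcubic unfolding tdeg_def by simp
    then show "card ?C \<le> 2"
      using \<open>b \<in> {c. (a, c) \<in> A}\<close> by (simp add: card_Diff_singleton)
  qed
  finally show False
    using heavy by linarith
qed

text \<open>Induction on the number of vertices behind the edge: a heavy neighbour either gives a
  balanced edge or a heavy edge with strictly fewer vertices behind it.\<close>

lemma balanced_edge_from_heavy_edge:
  assumes tree: "is_tree N A" and subcubic: "\<forall>u\<in>N. tdeg A u \<le> 3"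
    and m: "card (leaves N A) = m" "m \<ge> 2"
    and "(a, b) \<in> A" and "2 * m < 3 * card (side_leaves N A a b)"
  shows "\<exists>a b. (a, b) \<in> A \<and> m \<le> 3 * card (side_leaves N A a b)
                   \<and> 3 * card (side_leaves N A a b) \<le> 2 * m"
  using assms(5,6)
proof (induction "card (side_vertices A a b)" arbitrary: a b rule: less_induct)
  case less
  obtain c where c: "(a, c) \<in> A" "c \<noteq> b" "m \<le> 3 * card (side_leaves N A c a)"
    using heavy_side_has_heavy_neighbour[OF tree subcubic m less.prems] by blast
  have "(c, a) \<in> A"
    using is_treeD(3)[OF tree] c(1) by (rule symD)
  show ?case
  proof (cases "3 * card (side_leaves N A c a) \<le> 2 * m")
    case True
    with \<open>(c, a) \<in> A\<close> c(3) show ?thesis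
      by blast
  next
    case False
    have "card (side_vertices A c a) < card (side_vertices A a b)"
      using side_vertices_psubset[OF tree less.prems(1) c(1,2)] finite_side_vertices[OF tree]
      by (rule psubset_card_mono[rotated])
    moreover have "2 * m < 3 * card (side_leaves N A c a)"
      using False by simp
    ultimately show ?thesis
      using less.hyps \<open>(c, a) \<in> A\<close> by blast
  qed
qed

lemma card_leaves_le_sides:
  assumes tree: "is_tree N A" and "(a, b) \<in> A"
  shows "card (leaves N A) \<le> card (side_leaves N A a b) + card (side_leaves N A b a)"
proof -
  have "leaves N A \<subseteq> side_leaves N A a b \<union> side_leaves N A b a"
  proof
    fix l assume l: "l \<in> leaves N A"
    have "a \<in> N" "l \<in> N"
      using assms(2) is_treeD(2)[OF tree] l unfolding leaves_def by auto
    then have "(a, l) \<in> A\<^sup>*"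
      by (rule is_treeD(5)[OF tree])
    from rtrancl_split_at_edge[OF this, of b] l
    show "l \<in> side_leaves N A a b \<union> side_leaves N A b a"
      unfolding side_leaves_def by (auto simp: insert_commute)
  qed
  then have "card (leaves N A) \<le> card (side_leaves N A a b \<union> side_leaves N A b a)"
    using finite_side_leaves[OF tree] by (intro card_mono) auto
  also have "\<dots> \<le> card (side_leaves N A a b) + card (side_leaves N A b a)"
    by (rule card_Un_le)
  finally show ?thesis .
qed

lemma tree_balanced_edge:
  assumes tree: "is_tree N A" and subcubic: "\<forall>u\<in>N. tdeg A u \<le> 3"
    and m: "card (leaves N A) = m" "m \<ge> 2"
  shows "\<exists>a b. (a, b) \<in> A \<and> m \<le> 3 * card (side_leaves N A a b)
                   \<and> 3 * card (side_leaves N A a b) \<le> 2 * m"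
proof -
  obtain l\<^sub>1 l\<^sub>2 where "l\<^sub>1 \<in> leaves N A" "l\<^sub>2 \<in> leaves N A" "l\<^sub>1 \<noteq> l\<^sub>2"
    using m finite_leaves[OF tree] by (metis card_le_Suc0_iff_eq not_less_eq_eq numeral_2_eq_2)
  then have "(l\<^sub>1, l\<^sub>2) \<in> A\<^sup>*" "l\<^sub>1 \<noteq> l\<^sub>2"
    using is_treeD(5)[OF tree] unfolding leaves_def by auto
  then obtain a b where ab: "(a, b) \<in> A"
    by (metis converse_rtranclE)
  have ba: "(b, a) \<in> A"
    using is_treeD(3)[OF tree] ab by (rule symD)
  show ?thesis
  proof (cases "2 * m < 3 * card (side_leaves N A a b)")
    case True
    with ab show ?thesis
      by (rule balanced_edge_from_heavy_edge[OF tree subcubic m])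
  next
    case a_light: False
    show ?thesis
    proof (cases "2 * m < 3 * card (side_leaves N A b a)")
      case True
      with ba show ?thesis
        by (rule balanced_edge_from_heavy_edge[OF tree subcubic m])
    next
      case False
      have "m \<le> 3 * card (side_leaves N A a b) \<or> m \<le> 3 * card (side_leaves N A b a)"
        using card_leaves_le_sides[OF tree ab] m(1) by linarith
      with a_light False ab ba show ?thesis
        by (meson not_le)
    qed
  qed
qed

lemma rtrancl_with_pendant_edge:
  assumes "(x, y) \<in> (A \<union> {(u, c), (c, u)} - S)\<^sup>*" and "x \<noteq> c"
    and "A \<subseteq> N \<times> N" "c \<notin> N" "u \<in> N"
  shows "(y \<noteq> c \<longrightarrow> (x, y) \<in> (A - S)\<^sup>*) \<and> (y = c \<longrightarrow> (x, u) \<in> (A - S)\<^sup>*)"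
  using assms(1)
proof (induction rule: rtrancl_induct)
  case base
  then show ?case using assms(2) by simp
next
  case (step y z)
  show ?case
  proof (cases "z = c")
    case True
    then have "y = u" "y \<noteq> c"
      using step(2) assms(3-5) by auto
    then show ?thesis using step(3) True by auto
  next
    case False
    show ?thesis
    proof (cases "y = c")
      case True
      then have "z = u"
        using step(2) assms(3-5) False by auto
      then show ?thesis using step(3) True False by auto
    next
      case y_not_c: False
      then have "(y, z) \<in> A - S"
        using step(2) False by auto
      then show ?thesis
        using step(3) y_not_c False by (meson rtrancl_into_rtrancl)
    qed
  qed
qed

lemma is_tree_attach_leaf:
  assumes tree: "is_tree N A" and "u \<in> N" and "c \<notin> N"
  shows "is_tree (insert c N) (A \<union> {(u, c), (c, u)})"
proof -
  let ?A = "A \<union> {(u, c), (c, u)}"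
  note AN = is_treeD(2)[OF tree]
  have connected: "(x, y) \<in> ?A\<^sup>*" if "x \<in> insert c N" "y \<in> insert c N" for x y
  proof -
    have "A\<^sup>* \<subseteq> ?A\<^sup>*"
      by (rule rtrancl_mono) auto
    then have "(x, u) \<in> ?A\<^sup>*" "(u, y) \<in> ?A\<^sup>*"
      using that is_treeD(5)[OF tree] \<open>u \<in> N\<close> by auto
    then show ?thesis by (rule rtrancl_trans)
  qed
  have minimal: "(a, b) \<notin> (?A - {(a, b), (b, a)})\<^sup>*" if ab: "(a, b) \<in> ?A" for a b
  proof
    assume path: "(a, b) \<in> (?A - {(a, b), (b, a)})\<^sup>*"
    show False
    proof (cases "(a, b) \<in> A")
      case True
      then have "a \<noteq> c" "b \<noteq> c" "(u, c) \<notin> {(a, b), (b, a)}"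
        using AN \<open>c \<notin> N\<close> by auto
      then have "(a, b) \<in> (A - {(a, b), (b, a)})\<^sup>*"
        using rtrancl_with_pendant_edge[of a b A u c "{(a, b), (b, a)}" N] path AN assms(2,3)
        by (metis (no_types, lifting) Diff_insert2 insert_Diff_if)
      then show False
        using is_treeD(6)[OF tree True] by simp
    next
      case False
      then have "(a, b) = (u, c) \<or> (a, b) = (c, u)"
        using ab by auto
      moreover from this have "?A - {(a, b), (b, a)} = A"
        using AN \<open>c \<notin> N\<close> by auto
      ultimately have "(a, b) \<in> A\<^sup>+"
        using path \<open>u \<in> N\<close> \<open>c \<notin> N\<close> by (auto simp: rtrancl_eq_or_trancl)
      then have "a \<in> N \<and> b \<in> N"
        using AN by (metis mem_Sigma_iff subsetD tranclE converse_tranclE)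
      with \<open>(a, b) = (u, c) \<or> (a, b) = (c, u)\<close> \<open>c \<notin> N\<close> show False by auto
    qed
  qed
  have "sym ?A"
    using is_treeD(3)[OF tree] by (auto simp: sym_def)
  with connected minimal show ?thesis
    using is_treeD(1,2,4)[OF tree] assms(2,3) unfolding is_tree_def by auto
qed

lemma tdeg_attach_leaf:
  assumes "A \<subseteq> N \<times> N" "finite N" "c \<notin> N" "u \<in> N"
  shows "tdeg (A \<union> {(u, c), (c, u)}) v
           = (if v = u then Suc (tdeg A u) else if v = c then 1 else tdeg A v)"
proof -
  have "finite {w. (u, w) \<in> A}"
    using assms(1,2) by (auto intro: finite_subset)
  moreover have "{w. (v, w) \<in> A \<union> {(u, c), (c, u)}}
      = (if v = u then insert c {w. (v, w) \<in> A} else if v = c then {u} else {w. (v, w) \<in> A})"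
    using assms by auto
  moreover have "c \<notin> {w. (u, w) \<in> A}"
    using assms by auto
  ultimately show ?thesis
    unfolding tdeg_def by simp
qed

lemma leaves_attach_leaf:
  assumes "A \<subseteq> N \<times> N" "finite N" "c \<notin> N" "u \<in> N" and "tdeg A u \<ge> 1"
  shows "leaves (insert c N) (A \<union> {(u, c), (c, u)}) = insert c (leaves N A - {u})"
  using assms tdeg_attach_leaf[OF assms(1-4)] unfolding leaves_def by auto

lemma subcubic_tree_attach_leaf:
  assumes tree: "is_tree N A" and subcubic: "\<forall>v\<in>N. tdeg A v \<le> 3"
    and "u \<in> N" "c \<notin> N" "1 \<le> tdeg A u" "tdeg A u \<le> 2"
  defines "A' \<equiv> A \<union> {(u, c), (c, u)}"
  shows "is_tree (insert c N) A'" and "\<forall>v\<in>insert c N. tdeg A' v \<le> 3"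
    and "leaves (insert c N) A' = insert c (leaves N A - {u})" and "tdeg A' u = Suc (tdeg A u)"
  unfolding A'_def
  using is_tree_attach_leaf[OF tree assms(3,4)] subcubic assms(5,6)
    tdeg_attach_leaf[OF is_treeD(2,1)[OF tree] assms(4,3)]
    leaves_attach_leaf[OF is_treeD(2,1)[OF tree] assms(4,3,5)]
  by auto

lemma tree_leaf_tdeg:
  assumes tree: "is_tree N A" and "l \<in> leaves N A" "w \<in> N" "w \<noteq> l"
  shows "tdeg A l = 1"
proof -
  have "l \<in> N"
    using assms(2) unfolding leaves_def by simp
  then have "(l, w) \<in> A\<^sup>*"
    using is_treeD(5)[OF tree] assms(3) by blast
  with \<open>w \<noteq> l\<close> obtain q where "(l, q) \<in> A"
    by (auto elim: converse_rtranclE)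
  then have "card {v. (l, v) \<in> A} \<noteq> 0"
    using finite_tree_neighbours[OF tree] by auto
  then show ?thesis
    using assms(2) unfolding leaves_def tdeg_def by simp
qed

text \<open>Hanging two new leaves below an old leaf keeps all degrees at most three and adds one leaf.\<close>

lemma subcubic_tree_add_leaf:
  assumes tree: "is_tree N A" and "card N \<ge> 2" and subcubic: "\<forall>u\<in>N. tdeg A u \<le> 3"
    and l: "l \<in> leaves N A"
  obtains N' A' where "is_tree N' A'" "card N' \<ge> 2" "\<forall>u\<in>N'. tdeg A' u \<le> 3"
    "card (leaves N' A') = Suc (card (leaves N A))"
proof -
  note fin = is_treeD(1)[OF tree] and AN = is_treeD(2)[OF tree]
  have "l \<in> N"
    using l unfolding leaves_def by simp
  obtain w where "w \<in> N" "w \<noteq> l"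
    using \<open>card N \<ge> 2\<close> fin \<open>l \<in> N\<close> by (metis card_le_Suc0_iff_eq not_less_eq_eq numeral_2_eq_2)
  then have deg_l: "tdeg A l = 1"
    by (rule tree_leaf_tdeg[OF tree l])
  define c\<^sub>1 c\<^sub>2 where "c\<^sub>1 = Suc (Max N)" and "c\<^sub>2 = Suc (Suc (Max N))"
  have fresh: "c\<^sub>1 \<notin> N" "c\<^sub>2 \<notin> insert c\<^sub>1 N" "c\<^sub>1 \<noteq> l"
    using Max_ge[OF fin] \<open>l \<in> N\<close> unfolding c\<^sub>1_def c\<^sub>2_def by fastforce+
  define N\<^sub>1 A\<^sub>1 where "N\<^sub>1 = insert c\<^sub>1 N" and "A\<^sub>1 = A \<union> {(l, c\<^sub>1), (c\<^sub>1, l)}"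
  have tree\<^sub>1: "is_tree N\<^sub>1 A\<^sub>1" and subcubic\<^sub>1: "\<forall>u\<in>N\<^sub>1. tdeg A\<^sub>1 u \<le> 3"
    and leaves\<^sub>1: "leaves N\<^sub>1 A\<^sub>1 = insert c\<^sub>1 (leaves N A - {l})" and deg\<^sub>1: "tdeg A\<^sub>1 l = 2"
    using subcubic_tree_attach_leaf[OF tree subcubic \<open>l \<in> N\<close> fresh(1)] deg_l
    unfolding N\<^sub>1_def A\<^sub>1_def by simp_all
  have "l \<in> N\<^sub>1" "c\<^sub>2 \<notin> N\<^sub>1"
    using \<open>l \<in> N\<close> fresh unfolding N\<^sub>1_def by auto
  define N\<^sub>2 A\<^sub>2 where "N\<^sub>2 = insert c\<^sub>2 N\<^sub>1" and "A\<^sub>2 = A\<^sub>1 \<union> {(l, c\<^sub>2), (c\<^sub>2, l)}"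
  have tree\<^sub>2: "is_tree N\<^sub>2 A\<^sub>2" and subcubic\<^sub>2: "\<forall>u\<in>N\<^sub>2. tdeg A\<^sub>2 u \<le> 3"
    and "leaves N\<^sub>2 A\<^sub>2 = insert c\<^sub>2 (leaves N\<^sub>1 A\<^sub>1 - {l})"
    using subcubic_tree_attach_leaf[OF tree\<^sub>1 subcubic\<^sub>1 \<open>l \<in> N\<^sub>1\<close> \<open>c\<^sub>2 \<notin> N\<^sub>1\<close>] deg\<^sub>1
    unfolding N\<^sub>2_def A\<^sub>2_def by simp_all
  then have "leaves N\<^sub>2 A\<^sub>2 = insert c\<^sub>2 (insert c\<^sub>1 (leaves N A - {l}))"
    using leaves\<^sub>1 fresh(3) by simp
  moreover have "c\<^sub>1 \<notin> leaves N A" "c\<^sub>2 \<notin> leaves N A" "c\<^sub>2 \<noteq> c\<^sub>1"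
    using fresh unfolding leaves_def by auto
  ultimately have "card (leaves N\<^sub>2 A\<^sub>2) = Suc (Suc (card (leaves N A - {l})))"
    using finite_leaves[OF tree] by simp
  also have "\<dots> = Suc (card (leaves N A))"
    using card.remove[OF finite_leaves[OF tree] l] by simp
  finally have "card (leaves N\<^sub>2 A\<^sub>2) = Suc (card (leaves N A))" .
  moreover have "card N\<^sub>2 \<ge> 2"
    using \<open>card N \<ge> 2\<close> fin fresh unfolding N\<^sub>2_def N\<^sub>1_def by simp
  ultimately show ?thesis
    using that tree\<^sub>2 subcubic\<^sub>2 by blast
qed

lemma subcubic_tree_exists:
  assumes "m \<ge> 2"
  shows "\<exists>N A. is_tree N A \<and> card N \<ge> 2 \<and> (\<forall>u\<in>N. tdeg A u \<le> 3) \<and> card (leaves N A) = m"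
  using assms
proof (induction m rule: nat_induct_at_least)
  case base
  let ?N = "{0::nat, 1}" and ?A = "{(0::nat, 1::nat), (1, 0)}"
  have "?A - {(a, b), (b, a)} = {}" if "(a, b) \<in> ?A" for a b
    using that by auto
  then have "is_tree ?N ?A"
    unfolding is_tree_def sym_def by auto
  moreover have "tdeg ?A 0 = 1" "tdeg ?A 1 = 1"
    unfolding tdeg_def by auto
  then have "leaves ?N ?A = ?N"
    unfolding leaves_def by auto
  ultimately show ?case
    using \<open>tdeg ?A 0 = 1\<close> \<open>tdeg ?A 1 = 1\<close> by (intro exI[of _ ?N] exI[of _ ?A]) auto
next
  case (Suc m)
  then obtain N A where tree: "is_tree N A" "card N \<ge> 2" "\<forall>u\<in>N. tdeg A u \<le> 3"
    and "card (leaves N A) = m"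
    by blast
  moreover obtain l where "l \<in> leaves N A"
    using \<open>card (leaves N A) = m\<close> \<open>m \<ge> 2\<close> by fastforce
  ultimately show ?case
    by (metis subcubic_tree_add_leaf)
qed

section \<open>Branch decompositions\<close>

lemma branch_decomp_exists:
  assumes "finite (snd D)" and "card (snd D) \<ge> 2"
  shows "\<exists>N A \<beta>. is_branch_decomp D N A \<beta>"
proof -
  obtain N A where tree: "is_tree N A" "\<forall>u\<in>N. tdeg A u \<le> 3"
    and "card (leaves N A) = card (snd D)"
    using subcubic_tree_exists[OF assms(2)] by blast
  then obtain \<beta> where "bij_betw \<beta> (leaves N A) (snd D)"
    using finite_same_card_bij[OF finite_leaves assms(1)] by blast
  with tree show ?thesis
    unfolding is_branch_decomp_def by blast
qed

lemma dbw_attained: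
  assumes "snd D \<noteq> {}" and "is_branch_decomp D N A \<beta>"
  obtains N' A' \<beta>' where "is_branch_decomp D N' A' \<beta>'" and "dbw D = decomp_width D N' A' \<beta>'"
proof -
  let ?W = "{decomp_width D N A \<beta> | N A \<beta>. is_branch_decomp D N A \<beta>}"
  have "?W \<noteq> {}"
    using assms(2) by blast
  then have "Inf ?W \<in> ?W"
    by (rule Inf_nat_def1)
  with assms(1) that show ?thesis
    unfolding dbw_def by auto
qed

lemma cut_width_le_decomp_width:
  assumes "is_branch_decomp D N A \<beta>" and "(a, b) \<in> A"
  shows "card (SV D (\<beta> ` side_leaves N A a b) \<union> SV D (snd D - \<beta> ` side_leaves N A a b))
           \<le> decomp_width D N A \<beta>"
proof -
  let ?w = "\<lambda>(a, b). card (SV D (\<beta> ` side_leaves N A a b) \<union> SV D (snd D - \<beta> ` side_leaves N A a b))"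
  have tree: "is_tree N A"
    using assms(1) unfolding is_branch_decomp_def by simp
  have "finite A"
    using is_treeD(1,2)[OF tree] by (meson finite_SigmaI finite_subset)
  then have "finite (?w ` A)"
    by (rule finite_imageI)
  moreover have "{?w (a, b) | a b. (a, b) \<in> A} = ?w ` A"
    by auto
  ultimately show ?thesis
    unfolding decomp_width_def using assms(2) by (auto intro: Max_ge)
qed

lemma branch_decomp_balanced_cut:
  assumes decomp: "is_branch_decomp D N A \<beta>" and "card (snd D) \<ge> 2"
  obtains X where "X \<subseteq> snd D" and "card (snd D) \<le> 3 * card X" and "card (snd D) \<le> 3 * card (snd D - X)"
    and "card (SV D X \<union> SV D (snd D - X)) \<le> decomp_width D N A \<beta>"
proof -
  have tree: "is_tree N A" and subcubic: "\<forall>u\<in>N. tdeg A u \<le> 3"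
    and bij: "bij_betw \<beta> (leaves N A) (snd D)"
    using decomp unfolding is_branch_decomp_def by auto
  have "card (leaves N A) = card (snd D)"
    using bij by (rule bij_betw_same_card)
  with tree_balanced_edge[OF tree subcubic this assms(2)] obtain a b where "(a, b) \<in> A"
    and balanced: "card (snd D) \<le> 3 * card (side_leaves N A a b)"
      "3 * card (side_leaves N A a b) \<le> 2 * card (snd D)"
    by blast
  define X where "X = \<beta> ` side_leaves N A a b"
  have "X \<subseteq> snd D"
    using bij side_leaves_subset unfolding X_def bij_betw_def by blast
  have "card X = card (side_leaves N A a b)"
    unfolding X_def using bij side_leaves_subset
    by (intro card_image inj_on_subset[OF _ side_leaves_subset]) (simp add: bij_betw_def)
  moreover have "card (snd D - X) = card (snd D) - card X"
    using \<open>X \<subseteq> snd D\<close> finite_leaves[OF tree] bij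
    by (metis bij_betw_finite card_Diff_subset finite_subset)
  ultimately show ?thesis
    using that \<open>X \<subseteq> snd D\<close> balanced cut_width_le_decomp_width[OF decomp \<open>(a, b) \<in> A\<close>]
    unfolding X_def by auto
qed

lemma dbw_balanced_cut:
  assumes "finite (snd D)" and "card (snd D) \<ge> 2"
  obtains X where "X \<subseteq> snd D" and "card (snd D) \<le> 3 * card X" and "card (snd D) \<le> 3 * card (snd D - X)"
    and "card (SV D X \<union> SV D (snd D - X)) \<le> dbw D"
proof -
  have "snd D \<noteq> {}"
    using assms(2) by auto
  moreover obtain N A \<beta> where "is_branch_decomp D N A \<beta>"
    using branch_decomp_exists[OF assms] by blast
  ultimately obtain N A \<beta> where decomp: "is_branch_decomp D N A \<beta>" and "dbw D = decomp_width D N A \<beta>"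
    by (rule dbw_attained)
  with branch_decomp_balanced_cut[OF decomp assms(2)] that show ?thesis
    by metis
qed

lemma dbw_eq_0_if_no_through_vertex:
  assumes "finite (snd D)" and "card (snd D) \<ge> 2"
    and no_through: "\<And>x y z. (x, y) \<in> snd D \<Longrightarrow> (y, z) \<notin> snd D"
  shows "dbw D = 0"
proof -
  have "SV D X = {}" if "X \<subseteq> snd D" for X
    using that no_through unfolding SV_def by blast
  then have width_0: "decomp_width D N A \<beta> = 0" if "is_branch_decomp D N A \<beta>" for N A \<beta>
  proof -
    have "\<beta> ` side_leaves N A a b \<subseteq> snd D" for a b
      using that side_leaves_subset unfolding is_branch_decomp_def bij_betw_def by blast
    with \<open>\<And>X. X \<subseteq> snd D \<Longrightarrow> SV D X = {}\<close>
    have "insert 0 {card (SV D (\<beta> ` side_leaves N A a b) \<union> SV D (snd D - \<beta> ` side_leaves N A a b))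
                    | a b. (a, b) \<in> A} = {0}"
      by auto
    then show ?thesis
      unfolding decomp_width_def by (metis Max_singleton)
  qed
  obtain N A \<beta> where "is_branch_decomp D N A \<beta>"
    using branch_decomp_exists[OF assms(1,2)] by blast
  moreover have "snd D \<noteq> {}"
    using assms(2) by auto
  ultimately show ?thesis
    using width_0 by (metis dbw_attained)
qed

lemma SV_subset: "snd D \<subseteq> fst D \<times> fst D \<Longrightarrow> SV D X \<subseteq> fst D"
  unfolding SV_def by auto

lemma cut_uniform_at_vertex:
  assumes "X \<subseteq> snd D" and "y \<notin> SV D X \<union> SV D (snd D - X)"
    and "(p, y) \<in> snd D" and "(y, q) \<in> snd D"
    and "e \<in> snd D" "fst e = y \<or> snd e = y"
  shows "e \<in> X \<longleftrightarrow> (p, y) \<in> X"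
proof (cases "(p, y) \<in> X")
  case True
  then have "(y, z) \<in> X" if "(y, z) \<in> snd D" for z
    using assms(2,3) that unfolding SV_def by blast
  moreover have "(x, y) \<in> X" if "(x, y) \<in> snd D" for x
    using assms(2,4) \<open>(y, q) \<in> snd D\<close> calculation that unfolding SV_def by blast
  ultimately show ?thesis
    using True assms(5,6) by (cases e) auto
next
  case False
  then have "(y, z) \<notin> X" if "(y, z) \<in> snd D" for z
    using assms(2,3) that unfolding SV_def by blast
  moreover have "(x, y) \<notin> X" if "(x, y) \<in> snd D" for x
    using assms(1,2,4) calculation that unfolding SV_def by blast
  ultimately show ?thesis
    using False assms(5,6) by (cases e) auto
qed

section \<open>The construction\<close>

definition lab :: "nat \<Rightarrow> nat \<Rightarrow> nat" where
  "lab k i = prod_encode (k, i)"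

lemma lab_eq_iff [simp]: "lab k i = lab l j \<longleftrightarrow> k = l \<and> i = j"
  unfolding lab_def by simp

text \<open>The vertices \<open>u\<^sub>i, p\<^sub>i, q\<^sub>i, y\<^sub>j, x\<^sub>j, t\<^sub>j\<close> (\<open>i, j < n\<close>) of the header are \<open>lab 0 i\<close>, \<dots>,
  \<open>lab 5 j\<close>.  \<open>stage n a b\<close> is \<open>J\<^sub>n\<close> with the edges \<open>u\<^sub>i q\<^sub>i\<close> (\<open>i < a\<close>) and \<open>x\<^sub>j y\<^sub>j\<close> (\<open>j < b\<close>)
  contracted, so \<open>stage n 0 0 = J\<^sub>n\<close> and \<open>stage n n n = H\<^sub>n\<close>; the edges \<open>u\<^sub>i y\<^sub>j\<close> end in
  \<open>right_end b j\<close>.\<close>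

definition right_end :: "nat \<Rightarrow> nat \<Rightarrow> nat" where
  "right_end b j = (if j < b then lab 4 j else lab 3 j)"

lemma right_end_simps [simp]:
  "right_end b j \<noteq> lab 0 i" "right_end b j \<noteq> lab 1 i" "right_end b j \<noteq> lab 2 i" "right_end b j \<noteq> lab 5 i"
  "lab 0 i \<noteq> right_end b j" "lab 1 i \<noteq> right_end b j" "lab 2 i \<noteq> right_end b j" "lab 5 i \<noteq> right_end b j"
  "right_end b j \<noteq> lab (Suc 0) i" "lab (Suc 0) i \<noteq> right_end b j"
  "right_end b j = lab 4 k \<longleftrightarrow> j < b \<and> j = k" "right_end b j = lab 3 k \<longleftrightarrow> \<not> j < b \<and> j = k"
  "lab 4 k = right_end b j \<longleftrightarrow> j < b \<and> j = k" "lab 3 k = right_end b j \<longleftrightarrow> \<not> j < b \<and> j = k"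
  "right_end b j = right_end b j' \<longleftrightarrow> j = j'"
  unfolding right_end_def by auto

lemma right_end_Suc: "right_end (Suc b) j = (if j = b then lab 4 b else right_end b j)"
  unfolding right_end_def by auto

definition stage_V :: "nat \<Rightarrow> nat \<Rightarrow> nat \<Rightarrow> nat set" where
  "stage_V n a b = {lab 0 i | i. i < n} \<union> {lab 1 i | i. i < n} \<union> {lab 2 i | i. a \<le> i \<and> i < n}
     \<union> {lab 4 j | j. j < n} \<union> {lab 5 j | j. j < n} \<union> {lab 3 j | j. b \<le> j \<and> j < n}"

definition stage_E :: "nat \<Rightarrow> nat \<Rightarrow> nat \<Rightarrow> (nat \<times> nat) set" where
  "stage_E n a b = {(lab 0 i, right_end b j) | i j. i < n \<and> j < n} \<union> {(lab 1 i, lab 0 i) | i. i < a}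
     \<union> {(lab 0 i, lab 2 i) | i. a \<le> i \<and> i < n} \<union> {(lab 1 i, lab 2 i) | i. a \<le> i \<and> i < n}
     \<union> {(lab 4 j, lab 5 j) | j. j < n} \<union> {(lab 4 j, lab 3 j) | j. b \<le> j \<and> j < n}"

definition stage :: "nat \<Rightarrow> nat \<Rightarrow> nat \<Rightarrow> digraph" where
  "stage n a b = (stage_V n a b, stage_E n a b)"

lemma fst_stage [simp]: "fst (stage n a b) = stage_V n a b"
  and snd_stage [simp]: "snd (stage n a b) = stage_E n a b"
  unfolding stage_def by auto

lemma finite_stage_V: "finite (stage_V n a b)"
  unfolding stage_V_def by (intro finite_UnI finite_image_set) auto

lemma stage_E_subset: "a \<le> n \<Longrightarrow> stage_E n a b \<subseteq> stage_V n a b \<times> stage_V n a b"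
  unfolding stage_E_def stage_V_def right_end_def by auto

lemma finite_stage_E: "a \<le> n \<Longrightarrow> finite (stage_E n a b)"
  using stage_E_subset finite_stage_V by (meson finite_SigmaI finite_subset)

lemma card_stage_E_ge_2:
  assumes "n \<ge> 1" and "a \<le> n"
  shows "card (stage_E n a b) \<ge> 2"
proof -
  have "{(lab 0 0, right_end b 0), (lab 4 0, lab 5 0)} \<subseteq> stage_E n a b"
    using assms(1) unfolding stage_E_def by auto
  then have "card {(lab 0 0, right_end b 0), (lab 4 0, lab 5 0)} \<le> card (stage_E n a b)"
    using finite_stage_E[OF assms(2)] by (rule card_mono[rotated])
  then show ?thesis
    by simp
qed

lemma fst_contract: "fst (contract D x y) = fst D - {y}"
  unfolding contract_def Let_def by simp

lemma contract_edge_kept: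
  assumes "(s, t) \<in> snd D" "s \<noteq> y" "t \<noteq> y" "s \<noteq> t"
  shows "(s, t) \<in> snd (contract D x y)"
  using assms unfolding contract_def Let_def by force

lemma contract_edge_redirected:
  assumes "(s, y) \<in> snd D" "s \<noteq> y" "s \<noteq> x"
  shows "(s, x) \<in> snd (contract D x y)"
  using assms unfolding contract_def Let_def by force

lemma mem_snd_contractE:
  assumes "e \<in> snd (contract D x y)"
  obtains s t where "(s, t) \<in> snd D" "e = (if s = y then x else s, if t = y then x else t)"
    "(if s = y then x else s) \<noteq> (if t = y then x else t)"
  using assms unfolding contract_def Let_def by auto

lemma contract_stage_left:
  assumes "a < n"
  shows "contract (stage n a b) (lab 0 a) (lab 2 a) = stage n (Suc a) b"
proof (rule prod_eqI)
  show "fst (contract (stage n a b) (lab 0 a) (lab 2 a)) = fst (stage n (Suc a) b)"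
    unfolding fst_contract fst_stage stage_V_def using assms by (auto simp: Suc_le_eq)
  have "snd (contract (stage n a b) (lab 0 a) (lab 2 a)) \<subseteq> stage_E n (Suc a) b"
  proof
    fix e assume "e \<in> snd (contract (stage n a b) (lab 0 a) (lab 2 a))"
    then obtain s t where "(s, t) \<in> stage_E n a b"
      "e = (if s = lab 2 a then lab 0 a else s, if t = lab 2 a then lab 0 a else t)"
      "(if s = lab 2 a then lab 0 a else s) \<noteq> (if t = lab 2 a then lab 0 a else t)"
      by (rule mem_snd_contractE) simp
    then show "e \<in> stage_E n (Suc a) b"
      unfolding stage_E_def using assms by (auto simp: Suc_le_eq less_Suc_eq)
  qed
  moreover have "e \<in> snd (contract (stage n a b) (lab 0 a) (lab 2 a))" if "e \<in> stage_E n (Suc a) b" for e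
  proof (cases "e = (lab 1 a, lab 0 a)")
    case True
    have "(lab 1 a, lab 2 a) \<in> stage_E n a b"
      unfolding stage_E_def using assms by auto
    with True show ?thesis
      by (auto intro: contract_edge_redirected)
  next
    case False
    with that assms have "e \<in> stage_E n a b" "fst e \<noteq> lab 2 a" "snd e \<noteq> lab 2 a" "fst e \<noteq> snd e"
      unfolding stage_E_def by (auto simp: Suc_le_eq less_Suc_eq)
    then show ?thesis
      using contract_edge_kept[of "fst e" "snd e"] by simp
  qed
  ultimately show "snd (contract (stage n a b) (lab 0 a) (lab 2 a)) = snd (stage n (Suc a) b)"
    by auto
qed

lemma contract_stage_right:
  assumes "b < n"
  shows "contract (stage n n b) (lab 4 b) (lab 3 b) = stage n n (Suc b)"
proof (rule prod_eqI)
  show "fst (contract (stage n n b) (lab 4 b) (lab 3 b)) = fst (stage n n (Suc b))"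
    unfolding fst_contract fst_stage stage_V_def using assms by (auto simp: Suc_le_eq)
  have "snd (contract (stage n n b) (lab 4 b) (lab 3 b)) \<subseteq> stage_E n n (Suc b)"
  proof
    fix e assume "e \<in> snd (contract (stage n n b) (lab 4 b) (lab 3 b))"
    then obtain s t where "(s, t) \<in> stage_E n n b"
      "e = (if s = lab 3 b then lab 4 b else s, if t = lab 3 b then lab 4 b else t)"
      "(if s = lab 3 b then lab 4 b else s) \<noteq> (if t = lab 3 b then lab 4 b else t)"
      by (rule mem_snd_contractE) simp
    then show "e \<in> stage_E n n (Suc b)"
      unfolding stage_E_def using assms by (auto simp: Suc_le_eq right_end_Suc)
  qed
  moreover have "e \<in> snd (contract (stage n n b) (lab 4 b) (lab 3 b))" if "e \<in> stage_E n n (Suc b)" for e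
  proof (cases "\<exists>i<n. e = (lab 0 i, lab 4 b)")
    case True
    then obtain i where "i < n" "e = (lab 0 i, lab 4 b)"
      by blast
    moreover have "(lab 0 i, lab 3 b) \<in> stage_E n n b"
      unfolding stage_E_def using assms \<open>i < n\<close> by auto
    ultimately show ?thesis
      by (auto intro: contract_edge_redirected)
  next
    case False
    with that assms have "e \<in> stage_E n n b" "fst e \<noteq> lab 3 b" "snd e \<noteq> lab 3 b" "fst e \<noteq> snd e"
      unfolding stage_E_def by (auto simp: Suc_le_eq less_Suc_eq right_end_Suc split: if_splits)
    then show ?thesis
      using contract_edge_kept[of "fst e" "snd e"] by simp
  qed
  ultimately show "snd (contract (stage n n b) (lab 4 b) (lab 3 b)) = snd (stage n n (Suc b))"
    by auto
qed

lemma not_in_V3I: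
  assumes "{e \<in> snd D. fst e = v \<or> snd e = v} \<subseteq> {e\<^sub>1, e\<^sub>2}"
  shows "v \<notin> V3 D"
proof -
  have "card {e \<in> snd D. fst e = v \<or> snd e = v} \<le> card {e\<^sub>1, e\<^sub>2}"
    using assms by (rule card_mono[rotated]) simp
  also have "\<dots> \<le> 2"
    by (simp add: card_insert_if)
  finally show ?thesis
    unfolding V3_def by auto
qed

text \<open>Without the edge \<open>u\<^sub>a q\<^sub>a\<close> only \<open>p\<^sub>a\<close> reaches \<open>q\<^sub>a\<close>, and \<open>p\<^sub>a\<close> has degree one.\<close>

lemma two_contractible_stage_left:
  assumes "a < n"
  shows "two_contractible (stage n a b) (lab 0 a) (lab 2 a)"
proof -
  have "(lab 0 a, lab 2 a) \<in> stage_E n a b"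
    unfolding stage_E_def using assms by auto
  moreover have "lab 2 a \<notin> V3 (stage n a b)"
    by (rule not_in_V3I[of _ _ "(lab 0 a, lab 2 a)" "(lab 1 a, lab 2 a)"]) (auto simp: stage_E_def)
  moreover have "lab 1 a \<notin> V3 (stage n a b)"
    by (rule not_in_V3I[of _ _ "(lab 1 a, lab 2 a)" "(lab 1 a, lab 2 a)"]) (auto simp: stage_E_def)
  moreover have "z \<in> {lab 2 a, lab 1 a}" if "(z, lab 2 a) \<in> (stage_E n a b - {(lab 0 a, lab 2 a)})\<^sup>*" for z
    using that
  proof (induction rule: converse_rtrancl_induct)
    case (step z z')
    then show ?case
      unfolding stage_E_def by auto
  qed simp
  ultimately show ?thesis
    unfolding two_contractible_def by auto
qed

text \<open>Without the edge \<open>x\<^sub>b y\<^sub>b\<close> the vertex \<open>x\<^sub>b\<close> reaches only \<open>t\<^sub>b\<close>, which has degree one.\<close>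

lemma two_contractible_stage_right:
  assumes "b < n"
  shows "two_contractible (stage n n b) (lab 4 b) (lab 3 b)"
proof -
  have "(lab 4 b, lab 3 b) \<in> stage_E n n b"
    unfolding stage_E_def using assms by auto
  moreover have "lab 4 b \<notin> V3 (stage n n b)"
    by (rule not_in_V3I[of _ _ "(lab 4 b, lab 3 b)" "(lab 4 b, lab 5 b)"]) (auto simp: stage_E_def)
  moreover have "lab 5 b \<notin> V3 (stage n n b)"
    by (rule not_in_V3I[of _ _ "(lab 4 b, lab 5 b)" "(lab 4 b, lab 5 b)"]) (auto simp: stage_E_def)
  moreover have "w \<in> {lab 4 b, lab 5 b}" if "(lab 4 b, w) \<in> (stage_E n n b - {(lab 4 b, lab 3 b)})\<^sup>*" for w
    using that
  proof (induction rule: rtrancl_induct)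
    case (step w w')
    then show ?case
      unfolding stage_E_def by auto
  qed simp
  ultimately show ?thesis
    unfolding two_contractible_def by auto
qed

lemma dtop_minor_stage_left: "a \<le> n \<Longrightarrow> dtop_minor (stage n a 0) (stage n 0 0)"
proof (induction a)
  case 0
  show ?case
    by (rule dtop_minor.sub) (use stage_E_subset[of 0 n] in \<open>auto simp: is_subgraph_def\<close>)
next
  case (Suc a)
  then have "dtop_minor (contract (stage n a 0) (lab 0 a) (lab 2 a)) (stage n 0 0)"
    using two_contractible_stage_left[of a n 0] by (intro dtop_minor.contr) auto
  then show ?case
    using contract_stage_left[of a n 0] Suc by simp
qed

lemma dtop_minor_stage: "b \<le> n \<Longrightarrow> dtop_minor (stage n n b) (stage n 0 0)"
proof (induction b)
  case 0
  show ?case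
    using dtop_minor_stage_left[of n n] by simp
next
  case (Suc b)
  then have "dtop_minor (contract (stage n n b) (lab 4 b) (lab 3 b)) (stage n 0 0)"
    using two_contractible_stage_right[of b n] by (intro dtop_minor.contr) auto
  then show ?case
    using contract_stage_right[of b n] Suc by simp
qed

lemma is_digraph_stage_0: "is_digraph (stage n 0 0)"
proof -
  have "(v, v) \<notin> stage_E n 0 0" for v
    unfolding stage_E_def by auto
  then show ?thesis
    unfolding is_digraph_def using stage_E_subset[of 0 n] finite_stage_V by auto
qed

lemma dbw_stage_0:
  assumes "n \<ge> 1"
  shows "dbw (stage n 0 0) = 0"
proof (rule dbw_eq_0_if_no_through_vertex)
  show "finite (snd (stage n 0 0))" "card (snd (stage n 0 0)) \<ge> 2"
    using finite_stage_E card_stage_E_ge_2[OF assms] by simp_all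
  show "(y, z) \<notin> snd (stage n 0 0)" if "(x, y) \<in> snd (stage n 0 0)" for x y z
    using that by (auto simp: stage_E_def)
qed

section \<open>The final stage has large directed branch-width\<close>

lemma mem_final_stage_E:
  "e \<in> stage_E n n n \<longleftrightarrow>
     (\<exists>i j. i < n \<and> j < n \<and> e = (lab 0 i, lab 4 j)) \<or>
     (\<exists>i<n. e = (lab 1 i, lab 0 i)) \<or> (\<exists>j<n. e = (lab 4 j, lab 5 j))"
  unfolding stage_E_def right_end_def by auto

definition hubs :: "nat \<Rightarrow> nat set" where
  "hubs n = lab 0 ` {..<n} \<union> lab 4 ` {..<n}"

lemma card_lab_image: "card (lab k ` I) = card I"
  by (rule card_image) (simp add: inj_on_def)

lemma edges_at_hubs_subset:
  "{e \<in> stage_E n n n. \<forall>c\<in>hubs n. fst e = c \<or> snd e = c \<longrightarrow> c \<in> W}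
     \<subseteq> (\<lambda>(i, j). (lab 0 i, lab 4 j)) ` ({i. i < n \<and> lab 0 i \<in> W} \<times> {j. j < n \<and> lab 4 j \<in> W})
       \<union> (\<lambda>i. (lab 1 i, lab 0 i)) ` {i. i < n \<and> lab 0 i \<in> W}
       \<union> (\<lambda>j. (lab 4 j, lab 5 j)) ` {j. j < n \<and> lab 4 j \<in> W}"
proof
  fix e assume "e \<in> {e \<in> stage_E n n n. \<forall>c\<in>hubs n. fst e = c \<or> snd e = c \<longrightarrow> c \<in> W}"
  then have e: "e \<in> stage_E n n n" and at_hub: "\<And>c. c \<in> hubs n \<Longrightarrow> fst e = c \<or> snd e = c \<Longrightarrow> c \<in> W"
    by auto
  from e show "e \<in> (\<lambda>(i, j). (lab 0 i, lab 4 j)) ` ({i. i < n \<and> lab 0 i \<in> W} \<times> {j. j < n \<and> lab 4 j \<in> W})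
       \<union> (\<lambda>i. (lab 1 i, lab 0 i)) ` {i. i < n \<and> lab 0 i \<in> W}
       \<union> (\<lambda>j. (lab 4 j, lab 5 j)) ` {j. j < n \<and> lab 4 j \<in> W}"
    unfolding mem_final_stage_E
  proof (elim disjE exE conjE)
    fix i j assume "i < n" "j < n" "e = (lab 0 i, lab 4 j)"
    with at_hub[of "lab 0 i"] at_hub[of "lab 4 j"] show ?thesis
      unfolding hubs_def by auto
  next
    fix i assume "i < n" "e = (lab 1 i, lab 0 i)"
    with at_hub[of "lab 0 i"] show ?thesis
      unfolding hubs_def by auto
  next
    fix j assume "j < n" "e = (lab 4 j, lab 5 j)"
    with at_hub[of "lab 4 j"] show ?thesis
      unfolding hubs_def by auto
  qed
qed

lemma card_edges_at_hubs_le: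
  assumes "finite W"
  shows "card {e \<in> stage_E n n n. \<forall>c\<in>hubs n. fst e = c \<or> snd e = c \<longrightarrow> c \<in> W}
           \<le> card W * card W + 2 * card W"
proof -
  define I where "I = {i. i < n \<and> lab 0 i \<in> W}"
  define J where "J = {j. j < n \<and> lab 4 j \<in> W}"
  have "finite I" "finite J"
    unfolding I_def J_def by auto
  have "card I \<le> card W" "card J \<le> card W"
    using card_mono[OF assms, of "lab 0 ` I"] card_mono[OF assms, of "lab 4 ` J"]
    unfolding I_def J_def card_lab_image by auto
  let ?S\<^sub>1 = "(\<lambda>(i, j). (lab 0 i, lab 4 j)) ` (I \<times> J)"
  let ?S\<^sub>2 = "(\<lambda>i. (lab 1 i, lab 0 i)) ` I"
  let ?S\<^sub>3 = "(\<lambda>j. (lab 4 j, lab 5 j)) ` J"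
  have "card {e \<in> stage_E n n n. \<forall>c\<in>hubs n. fst e = c \<or> snd e = c \<longrightarrow> c \<in> W}
      \<le> card (?S\<^sub>1 \<union> ?S\<^sub>2 \<union> ?S\<^sub>3)"
    using edges_at_hubs_subset[of n W] \<open>finite I\<close> \<open>finite J\<close> unfolding I_def J_def
    by (intro card_mono) auto
  also have "\<dots> \<le> card ?S\<^sub>1 + card ?S\<^sub>2 + card ?S\<^sub>3"
    by (rule order_trans[OF card_Un_le add_mono[OF card_Un_le order_refl]])
  also have "\<dots> \<le> card (I \<times> J) + card I + card J"
    by (intro add_mono card_image_le finite_SigmaI \<open>finite I\<close> \<open>finite J\<close>)
  also have "\<dots> = card I * card J + card I + card J"
    by (simp add: card_cartesian_product)
  also have "\<dots> \<le> card W * card W + 2 * card W"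
    using \<open>card I \<le> card W\<close> \<open>card J \<le> card W\<close> mult_le_mono[of "card I" "card W" "card J" "card W"]
    by linarith
  finally show ?thesis .
qed

lemma final_stage_cut_uniform_at_hub:
  assumes "n \<ge> 1" and X: "X \<subseteq> stage_E n n n"
    and "c \<in> hubs n" and "c \<notin> SV (stage n n n) X \<union> SV (stage n n n) (stage_E n n n - X)"
    and "e \<in> stage_E n n n" "fst e = c \<or> snd e = c"
    and "e' \<in> stage_E n n n" "fst e' = c \<or> snd e' = c"
  shows "e \<in> X \<longleftrightarrow> e' \<in> X"
proof -
  obtain p q where pq: "(p, c) \<in> stage_E n n n" "(c, q) \<in> stage_E n n n"
    using \<open>c \<in> hubs n\<close> \<open>n \<ge> 1\<close> unfolding hubs_def mem_final_stage_E by fastforce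
  have "X \<subseteq> snd (stage n n n)"
    using X by simp
  moreover have "c \<notin> SV (stage n n n) X \<union> SV (stage n n n) (snd (stage n n n) - X)"
    using assms(4) by simp
  ultimately have "f \<in> X \<longleftrightarrow> (p, c) \<in> X" if "f \<in> stage_E n n n" "fst f = c \<or> snd f = c" for f
    by (rule cut_uniform_at_vertex) (use pq that in simp_all)
  then show ?thesis
    using assms(5-8) by blast
qed

text \<open>Every hub outside the cut is joined to \<open>u\<^sub>i\<^sub>0 x\<^sub>j\<^sub>0\<close> by at most two edges \<open>u\<^sub>i x\<^sub>j\<close>
  that pairwise share a hub outside the cut, namely \<open>x\<^sub>j\<^sub>0\<close> or \<open>u\<^sub>i\<^sub>0\<close>.\<close>

lemma final_stage_cut_side_determined:
  assumes "n \<ge> 1" and X: "X \<subseteq> stage_E n n n"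
  defines "W \<equiv> SV (stage n n n) X \<union> SV (stage n n n) (stage_E n n n - X)"
  assumes "i\<^sub>0 < n" "lab 0 i\<^sub>0 \<notin> W" "j\<^sub>0 < n" "lab 4 j\<^sub>0 \<notin> W"
    and e: "e \<in> stage_E n n n" and c: "c \<in> hubs n" "c \<notin> W" "fst e = c \<or> snd e = c"
  shows "e \<in> X \<longleftrightarrow> (lab 0 i\<^sub>0, lab 4 j\<^sub>0) \<in> X"
proof -
  note uniform = final_stage_cut_uniform_at_hub[OF assms(1) X, folded W_def]
  have hubs: "lab 0 i \<in> hubs n" "lab 4 j \<in> hubs n" if "i < n" "j < n" for i j
    using that unfolding hubs_def by auto
  have middle: "(lab 0 i, lab 4 j) \<in> stage_E n n n" if "i < n" "j < n" for i j
    using that unfolding mem_final_stage_E by auto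
  consider i where "i < n" "c = lab 0 i" | j where "j < n" "c = lab 4 j"
    using c(1) unfolding hubs_def by auto
  then show ?thesis
  proof cases
    case (1 i)
    then have "e \<in> X \<longleftrightarrow> (lab 0 i, lab 4 j\<^sub>0) \<in> X"
      using uniform[OF c(1,2) e c(3)] middle \<open>j\<^sub>0 < n\<close> by simp
    also have "\<dots> \<longleftrightarrow> (lab 0 i\<^sub>0, lab 4 j\<^sub>0) \<in> X"
      using uniform[OF hubs(2) \<open>lab 4 j\<^sub>0 \<notin> W\<close>] middle 1 \<open>i\<^sub>0 < n\<close> \<open>j\<^sub>0 < n\<close> by simp
    finally show ?thesis .
  next
    case (2 j)
    then have "e \<in> X \<longleftrightarrow> (lab 0 i\<^sub>0, lab 4 j) \<in> X"
      using uniform[OF c(1,2) e c(3)] middle \<open>i\<^sub>0 < n\<close> by simp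
    also have "\<dots> \<longleftrightarrow> (lab 0 i\<^sub>0, lab 4 j\<^sub>0) \<in> X"
      using uniform[OF hubs(1) \<open>lab 0 i\<^sub>0 \<notin> W\<close>] middle 2 \<open>i\<^sub>0 < n\<close> \<open>j\<^sub>0 < n\<close> by simp
    finally show ?thesis .
  qed
qed

lemma final_stage_cut_bound:
  assumes "n \<ge> 1" and X: "X \<subseteq> stage_E n n n"
  defines "W \<equiv> SV (stage n n n) X \<union> SV (stage n n n) (stage_E n n n - X)"
  shows "n \<le> card W \<or> card X \<le> card W * card W + 2 * card W
           \<or> card (stage_E n n n - X) \<le> card W * card W + 2 * card W"
proof -
  let ?E = "stage_E n n n"
  let ?B = "{e \<in> ?E. \<forall>c\<in>hubs n. fst e = c \<or> snd e = c \<longrightarrow> c \<in> W}"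
  have "W \<subseteq> stage_V n n n"
    unfolding W_def using SV_subset[of "stage n n n"] stage_E_subset[of n n n] by auto
  then have "finite W"
    using finite_stage_V by (rule finite_subset)
  show ?thesis
  proof (cases "lab 0 ` {..<n} \<subseteq> W \<or> lab 4 ` {..<n} \<subseteq> W")
    case True
    then have "n \<le> card W"
      using card_mono[OF \<open>finite W\<close>, of "lab 0 ` {..<n}"] card_mono[OF \<open>finite W\<close>, of "lab 4 ` {..<n}"]
      unfolding card_lab_image by auto
    then show ?thesis
      by simp
  next
    case False
    then obtain i\<^sub>0 j\<^sub>0 where "i\<^sub>0 < n" "lab 0 i\<^sub>0 \<notin> W" "j\<^sub>0 < n" "lab 4 j\<^sub>0 \<notin> W"
      by auto
    then have "e \<in> X \<longleftrightarrow> (lab 0 i\<^sub>0, lab 4 j\<^sub>0) \<in> X" if "e \<in> ?E - ?B" for e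
      using final_stage_cut_side_determined[OF assms(1) X, folded W_def] that by blast
    then have "X \<subseteq> ?B \<or> ?E - X \<subseteq> ?B"
      using X by (cases "(lab 0 i\<^sub>0, lab 4 j\<^sub>0) \<in> X") auto
    moreover have "finite ?B"
      using finite_stage_E[of n n n] by simp
    ultimately show ?thesis
      using card_edges_at_hubs_le[OF \<open>finite W\<close>, of n] card_mono[of ?B] by (meson le_trans)
  qed
qed

lemma card_final_stage_E_ge: "n * n \<le> card (stage_E n n n)"
proof -
  have "(\<lambda>(i, j). (lab 0 i, lab 4 j)) ` ({..<n} \<times> {..<n}) \<subseteq> stage_E n n n"
    by (auto simp: mem_final_stage_E)
  then have "card ((\<lambda>(i, j). (lab 0 i, lab 4 j)) ` ({..<n} \<times> {..<n})) \<le> card (stage_E n n n)"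
    using finite_stage_E[of n n n] by (rule card_mono[rotated]) simp
  moreover have "inj_on (\<lambda>(i, j). (lab 0 i, lab 4 j)) ({..<n} \<times> {..<n})"
    by (auto simp: inj_on_def)
  ultimately show ?thesis
    by (simp add: card_image card_cartesian_product)
qed

lemma dbw_final_stage_lower_bound:
  assumes "n \<ge> 1"
  defines "w \<equiv> dbw (stage n n n)"
  shows "n \<le> w \<or> n * n \<le> 3 * (w * w + 2 * w)"
proof -
  let ?H = "stage n n n" and ?E = "stage_E n n n"
  obtain X where "X \<subseteq> ?E" and balanced: "card ?E \<le> 3 * card X" "card ?E \<le> 3 * card (?E - X)"
    and "card (SV ?H X \<union> SV ?H (?E - X)) \<le> w"
    unfolding w_def
    by (rule dbw_balanced_cut[of ?H]) (use finite_stage_E card_stage_E_ge_2[OF assms(1)] in simp_all)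
  define c where "c = card (SV ?H X \<union> SV ?H (?E - X))"
  have "3 * (c * c + 2 * c) \<le> 3 * (w * w + 2 * w)"
    using \<open>card (SV ?H X \<union> SV ?H (?E - X)) \<le> w\<close> unfolding c_def
    by (intro mult_le_mono2 add_mono mult_le_mono) auto
  moreover have "n * n \<le> card ?E"
    by (rule card_final_stage_E_ge)
  moreover have "n \<le> c \<or> card X \<le> c * c + 2 * c \<or> card (?E - X) \<le> c * c + 2 * c"
    unfolding c_def by (rule final_stage_cut_bound[OF assms(1) \<open>X \<subseteq> ?E\<close>])
  moreover have "c \<le> w"
    using \<open>card (SV ?H X \<union> SV ?H (?E - X)) \<le> w\<close> unfolding c_def .
  ultimately show ?thesis
    using balanced by (meson le_trans mult_le_mono2)
qed

theorem mainTheorem12: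
  shows "\<not> (\<exists>g :: nat \<Rightarrow> nat. \<forall>J H. is_digraph J \<longrightarrow> dtop_minor H J \<longrightarrow> dbw H \<le> g (dbw J))"
proof
  assume "\<exists>g :: nat \<Rightarrow> nat. \<forall>J H. is_digraph J \<longrightarrow> dtop_minor H J \<longrightarrow> dbw H \<le> g (dbw J)"
  then obtain g :: "nat \<Rightarrow> nat"
    where g: "\<And>J H. is_digraph J \<Longrightarrow> dtop_minor H J \<Longrightarrow> dbw H \<le> g (dbw J)"
    by blast
  define K where "K = g 0"
  define n where "n = 2 * K + 2"
  have "n \<ge> 1"
    unfolding n_def by simp
  define w where "w = dbw (stage n n n)"
  have "w \<le> K"
    using g[OF is_digraph_stage_0 dtop_minor_stage[of n n, OF order_refl]] dbw_stage_0[OF \<open>n \<ge> 1\<close>]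
    by (simp add: w_def K_def)
  then have "w * w \<le> K * K"
    using mult_le_mono by blast
  moreover have "n \<le> w \<or> n * n \<le> 3 * (w * w + 2 * w)"
    unfolding w_def by (rule dbw_final_stage_lower_bound[OF \<open>n \<ge> 1\<close>])
  ultimately show False
    using \<open>w \<le> K\<close> by (elim disjE) (simp_all add: n_def)
qed

end
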